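(* Let $f\ge 1$ and $k\ge 3$ be integers and let there be $n=kf+1$ validators, each maintaining a local DAG as described in the context (Tusk setting). Let $p_i$ be a validator and $w$ a wave such that $DAG_i[\mathit{round}(w,2)]$ contains at least $(k-1)f+1$ vertices. Then there are at least $(k-2)f+1$ vertices $v\in DAG_i[\mathit{round}(w,1)]$ that satisfy the commit rule, i.e. for each of them at least $f+1$ vertices of $DAG_i[\mathit{round}(w,2)]$ have an edge to $v$.
   Context: Setting: $n=kf+1$ validators $p_1,\dots,p_n$, at most $f$ Byzantine. All local DAGs are subsets of one common set of vertices. Each vertex has a round number $r\ge1$ and a source validator; for each validator and round there is at most one vertex (no equivocation). Hence each round has at most $kf+1$ vertices. Every vertex of round $r\ge2$ has edges to $(k-1)f+1$ vertices of round $r-1$ with distinct sources. Each validator $p_i$ has a local DAG $DAG_i$, closed under edges; $DAG_i[r]$ is its set of round-$r$ vertices. Waves consist of 3 rounds, pipelined so that round 3 of wave $w$ is round 1 of wave $w+1$: $\mathit{round}(w,j)=2(w-1)+j$, $j=1,2,3$. Commit rule: a vertex $v$ of $\mathit{round}(w,1)$ satisfies the commit rule in $DAG_i$ if at least $f+1$ vertices of $DAG_i[\mathit{round}(w,2)]$ have an edge to $v$. *)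

theory Defs
  imports Main
begin

text \<open>Tusk setting. Vertices have type 'v; rnd v is the round number, src v the
source validator (validators are indexed 0..n-1), and edges v is the set of
vertices that v has an edge to.\<close>

text \<open>round(w,j) = 2(w-1)+j, waves numbered from 1.\<close>
definition wround :: "nat \<Rightarrow> nat \<Rightarrow> nat" where
  "wround w j = 2 * (w - 1) + j"

definition layer :: "('v \<Rightarrow> nat) \<Rightarrow> 'v set \<Rightarrow> nat \<Rightarrow> 'v set" where
  "layer rnd D r = {v \<in> D. rnd v = r}"

definition commit_rule ::
  "('v \<Rightarrow> nat) \<Rightarrow> ('v \<Rightarrow> 'v set) \<Rightarrow> nat \<Rightarrow> 'v set \<Rightarrow> nat \<Rightarrow> 'v \<Rightarrow> bool" where
  "commit_rule rnd edges f D w v \<longleftrightarrow>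
     f + 1 \<le> card {u \<in> layer rnd D (wround w 2). v \<in> edges u}"

end

theory Submission
  imports Defs
begin

text \<open>Count the edges from the round-2 layer \<open>R\<^sub>2\<close> to the round-1 layer \<open>R\<^sub>1\<close> of the wave in two
ways. Every vertex of \<open>R\<^sub>2\<close> has exactly \<open>(k-1)f+1\<close> of them, so there are \<open>s((k-1)f+1)\<close> edges,
where \<open>s = |R\<^sub>2| \<ge> (k-1)f+1\<close>. A committed vertex of \<open>R\<^sub>1\<close> receives at most \<open>s\<close> edges and an
uncommitted one at most \<open>f\<close>, while \<open>|R\<^sub>1| \<le> kf+1\<close>. With at most \<open>(k-2)f\<close> committed vertices
the edge count would be at most \<open>(k-2)f(s-f) + (kf+1)f\<close>, which is smaller than
\<open>s((k-1)f+1)\<close> because \<open>s \<ge> 2f+1\<close>.\<close>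

lemma sum_card_filter_swap:
  assumes "finite A" "finite B"
  shows "(\<Sum>x\<in>A. card {y \<in> B. R x y}) = (\<Sum>y\<in>B. card {x \<in> A. R x y})"
proof -
  have "(\<Sum>x\<in>A. card {y \<in> B. R x y}) = (\<Sum>x\<in>A. \<Sum>y\<in>B. if R x y then 1 else 0)"
    using assms(2) by (simp add: sum.inter_filter[symmetric])
  also have "\<dots> = (\<Sum>y\<in>B. \<Sum>x\<in>A. if R x y then 1 else 0)"
    by (rule sum.swap)
  also have "\<dots> = (\<Sum>y\<in>B. card {x \<in> A. R x y})"
    using assms(1) by (simp add: sum.inter_filter[symmetric])
  finally show ?thesis .
qed

lemma sum_le_threshold_split:
  fixes d :: "'a \<Rightarrow> nat"
  assumes "finite A" "\<forall>x\<in>A. d x \<le> s"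
  shows "(\<Sum>x\<in>A. d x) \<le> card {x \<in> A. t < d x} * s + card {x \<in> A. d x \<le> t} * t"
proof -
  have "(\<Sum>x\<in>A. d x) = (\<Sum>x\<in>{x \<in> A. t < d x}. d x) + (\<Sum>x\<in>{x \<in> A. d x \<le> t}. d x)"
    using assms(1) by (subst sum.union_disjoint[symmetric]) (auto intro: sum.cong)
  also have "\<dots> \<le> (\<Sum>x\<in>{x \<in> A. t < d x}. s) + (\<Sum>x\<in>{x \<in> A. d x \<le> t}. t)"
    using assms(2) by (intro add_mono sum_mono) auto
  finally show ?thesis by simp
qed

lemma layer_finite_card_le:
  assumes "D \<subseteq> V" "\<forall>v\<in>V. src v < n"
    and "\<forall>u\<in>V. \<forall>v\<in>V. rnd u = rnd v \<and> src u = src v \<longrightarrow> u = v"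
  shows "finite (layer rnd D r)" "card (layer rnd D r) \<le> n"
proof -
  have inj: "inj_on src (layer rnd D r)" and sub: "src ` layer rnd D r \<subseteq> {..<n}"
    using assms unfolding layer_def inj_on_def by blast+
  show "finite (layer rnd D r)"
    using inj sub by (meson finite_imageD finite_lessThan finite_subset)
  show "card (layer rnd D r) \<le> n"
    using card_inj_on_le[OF inj sub] by simp
qed

lemma layer_filter_edges_closed:
  assumes "\<forall>v\<in>D. edges v \<subseteq> D" "u \<in> D"
  shows "{v \<in> layer rnd D r. v \<in> edges u} = {v \<in> edges u. rnd v = r}"
  using assms unfolding layer_def by auto

lemma many_above_threshold:
  fixes k f s c q :: nat
  assumes "3 \<le> k" "(k - 1) * f + 1 \<le> s" "c + q \<le> k * f + 1"
    and "s * ((k - 1) * f + 1) \<le> c * s + q * f"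
  shows "(k - 2) * f + 1 \<le> c"
proof (rule ccontr)
  assume "\<not> ?thesis"
  then obtain c' where c': "(k - 2) * f = c + c'" using le_Suc_ex by fastforce
  have k1: "(k - 1) * f = (k - 2) * f + f" and k0: "k * f = (k - 2) * f + 2 * f"
    using assms(1) by (simp_all add: diff_mult_distrib)
  have "2 * f \<le> (k - 1) * f" using assms(1) by (intro mult_right_mono) auto
  then have s_ge: "2 * f + 1 \<le> s" using assms(2) by linarith
  have q: "q \<le> c' + 2 * f + 1" using assms(3) c' k0 by linarith
  have "c * s + c' * s + s * (f + 1) = s * ((k - 1) * f + 1)"
    unfolding k1 c' by (simp add: algebra_simps)
  also have "\<dots> \<le> c * s + q * f" by (fact assms(4))
  also have "\<dots> \<le> c * s + (c' + 2 * f + 1) * f"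
    using q by (intro add_left_mono mult_right_mono) simp_all
  finally have "c' * s + s * (f + 1) \<le> c' * f + (2 * f + 1) * f"
    by (simp add: algebra_simps)
  moreover have "c' * f \<le> c' * s" using s_ge by simp
  moreover have "(2 * f + 1) * f < (2 * f + 1) * (f + 1)" by simp
  moreover have "(2 * f + 1) * (f + 1) \<le> s * (f + 1)" using s_ge by (rule mult_right_mono) simp
  ultimately show False by linarith
qed

theorem lemma4:
  fixes f k n :: nat
    and V :: "'v set"
    and rnd src :: "'v \<Rightarrow> nat"
    and edges :: "'v \<Rightarrow> 'v set"
    and DAG :: "nat \<Rightarrow> 'v set"
    and i w :: nat
  assumes hf: "f \<ge> 1"
    and hk: "k \<ge> 3"
    and hn: "n = k * f + 1"
    and vert: "\<forall>v\<in>V. rnd v \<ge> 1 \<and> src v < n"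
    and no_equiv: "\<forall>u\<in>V. \<forall>v\<in>V. rnd u = rnd v \<and> src u = src v \<longrightarrow> u = v"
    and edges_in: "\<forall>v\<in>V. edges v \<subseteq> V"
    and strong_edges: "\<forall>v\<in>V. rnd v \<ge> 2 \<longrightarrow>
        card {u \<in> edges v. rnd u = rnd v - 1} = (k - 1) * f + 1 \<and>
        inj_on src {u \<in> edges v. rnd u = rnd v - 1}"
    and local_dags: "\<forall>j<n. DAG j \<subseteq> V \<and> (\<forall>v\<in>DAG j. edges v \<subseteq> DAG j)"
    and hi: "i < n"
    and hw: "w \<ge> 1"
    and big: "card (layer rnd (DAG i) (wround w 2)) \<ge> (k - 1) * f + 1"
  shows "card {v \<in> layer rnd (DAG i) (wround w 1). commit_rule rnd edges f (DAG i) w v}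
           \<ge> (k - 2) * f + 1"
proof -
  define R1 where "R1 = layer rnd (DAG i) (wround w 1)"
  define R2 where "R2 = layer rnd (DAG i) (wround w 2)"
  define indeg where "indeg v = card {u \<in> R2. v \<in> edges u}" for v
  have D: "DAG i \<subseteq> V" "\<forall>v\<in>DAG i. edges v \<subseteq> DAG i" using local_dags hi by auto
  have src_lt: "\<forall>v\<in>V. src v < n" using vert by blast
  have R1: "finite R1" "card R1 \<le> k * f + 1" and R2: "finite R2"
    using layer_finite_card_le[OF D(1) src_lt no_equiv] hn unfolding R1_def R2_def by auto
  have out: "card {v \<in> R1. v \<in> edges u} = (k - 1) * f + 1" if "u \<in> R2" for u
  proof -
    have u: "u \<in> DAG i" "2 \<le> rnd u" "rnd u - 1 = wround w 1"
      using that unfolding R2_def layer_def wround_def by auto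
    then have "{v \<in> R1. v \<in> edges u} = {v \<in> edges u. rnd v = rnd u - 1}"
      using layer_filter_edges_closed[OF D(2) u(1)] unfolding R1_def by simp
    then show ?thesis
      using strong_edges D(1) u by auto
  qed
  have "card R2 * ((k - 1) * f + 1) = (\<Sum>v\<in>R1. indeg v)"
    using sum_card_filter_swap[OF R2 R1(1), of "\<lambda>u v. v \<in> edges u"] out
    unfolding indeg_def by simp
  also have "\<dots> \<le> card {v \<in> R1. f < indeg v} * card R2 + card {v \<in> R1. indeg v \<le> f} * f"
    using R2 by (intro sum_le_threshold_split R1(1)) (auto simp: indeg_def intro: card_mono)
  finally have "card R2 * ((k - 1) * f + 1)
      \<le> card {v \<in> R1. f < indeg v} * card R2 + card {v \<in> R1. indeg v \<le> f} * f" .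
  moreover have "card {v \<in> R1. f < indeg v} + card {v \<in> R1. indeg v \<le> f} \<le> k * f + 1"
    using R1 by (subst card_Un_disjoint[symmetric]) (auto intro: order_trans[OF card_mono])
  ultimately have "(k - 2) * f + 1 \<le> card {v \<in> R1. f < indeg v}"
    using many_above_threshold[OF hk big[folded R2_def]] by (simp add: mult.commute)
  then show ?thesis
    unfolding R1_def R2_def indeg_def commit_rule_def by (simp add: Suc_le_eq)
qed

end
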